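(* Assume that $q$ is $\mathcal{C}$-decomposable for a partition $\mathcal{C}=\{C_1,\ldots,C_r\}$ of $C$, with associated function $\tilde c$. Then, for each $k\in\{0,\ldots,n\}$, the restriction of $\tilde c$ to $\mathcal{T}_k$ is a probability distribution on $\mathcal{T}_k$. More precisely, $\tilde c(\mathbf{a})=\Pr(E_{k,\mathbf{a}})$ for every $\mathbf{a}\in\mathcal{T}_k$.
   Context: Consider components $C=[n]$ with random lifetimes $T_1,\ldots,T_n$ whose joint distribution has no ties. The relative quality function is $q(A)=\Pr(\max_{i\notin A}T_i<\min_{i\in A}T_i)$, with $q(\varnothing)=q([n])=1$. Thus $q(A)$ is the probability that the $|A|$ longest-lived components are exactly those in $A$, and $\sum_{|A|=k}q(A)=1$ for each $k$. For a partition $\mathcal{C}=\{C_1,\ldots,C_r\}$ of $C$ into nonempty blocks, write $n_j=|C_j|$, $A_j=A\cap C_j$, and $q^{C_j}(A)=\Pr(\max_{i\in C_j\setminus A}T_i<\min_{i\in A}T_i)$ for $A\subseteq C_j$. The function $q$ is $\mathcal{C}$-decomposable if there is a function $\tilde c\colon\prod_{j=1}^r\{0,\ldots,n_j\}\to\mathbb{R}$ with $q(A)=\tilde c(|A_1|,\ldots,|A_r|)\prod_{j=1}^r q^{C_j}(A_j)$ for all $A\subseteq C$. For $0\le k\le n$ let $\mathcal{T}_k=\{\mathbf{a}=(a_1,\ldots,a_r)\in\mathbb{N}^r: 0\le a_j\le n_j,\ \sum_j a_j=k\}$. For $\mathbf{a}\in\mathcal{T}_k$, let $E_{k,\mathbf{a}}$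 be the event that, among the first $n-k$ failed components, exactly $n_j-a_j$ lie in $C_j$ for every $j\in[r]$. Equivalently, among the $k$ longest-lived components, exactly $a_j$ lie in $C_j$ for every $j$. *)

theory Defs
  imports "HOL-Probability.Probability"
begin

text \<open>Components are C = {1..n}; lifetimes T :: nat => 'a => real on a probability space M.
  Partition blocks are Cs 0, ..., Cs (r-1). Tuples in prod_j {0..n_j} are lists of length r.\<close>

definition comps :: "nat \<Rightarrow> nat set" where
  "comps n = {1..n}"

text \<open>Relative quality function q(A) = Pr(max_{i in C - A} T_i < min_{i in A} T_i),
  relative to a ground set D (D = C gives q, D = C_j gives q^{C_j}).
  Empty max/min conventions make q(empty) = q(D) = 1.\<close>
definition rel_quality :: "'a measure \<Rightarrow> (nat \<Rightarrow> 'a \<Rightarrow> real) \<Rightarrow> nat set \<Rightarrow> nat set \<Rightarrow> real" where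
  "rel_quality M T D A =
     measure M {\<omega> \<in> space M. \<forall>i\<in>D - A. \<forall>l\<in>A. T i \<omega> < T l \<omega>}"

definition is_partition :: "nat set \<Rightarrow> nat \<Rightarrow> (nat \<Rightarrow> nat set) \<Rightarrow> bool" where
  "is_partition C r Cs \<longleftrightarrow>
     (\<forall>j<r. Cs j \<noteq> {} \<and> Cs j \<subseteq> C) \<and>
     (\<forall>j<r. \<forall>j'<r. j \<noteq> j' \<longrightarrow> Cs j \<inter> Cs j' = {}) \<and>
     (\<Union>j<r. Cs j) = C"

definition block_counts :: "nat \<Rightarrow> (nat \<Rightarrow> nat set) \<Rightarrow> nat set \<Rightarrow> nat list" where
  "block_counts r Cs A = map (\<lambda>j. card (A \<inter> Cs j)) [0..<r]"

definition decomposable ::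
  "'a measure \<Rightarrow> (nat \<Rightarrow> 'a \<Rightarrow> real) \<Rightarrow> nat \<Rightarrow> nat \<Rightarrow> (nat \<Rightarrow> nat set) \<Rightarrow> (nat list \<Rightarrow> real) \<Rightarrow> bool" where
  "decomposable M T n r Cs c \<longleftrightarrow>
     (\<forall>A. A \<subseteq> comps n \<longrightarrow>
        rel_quality M T (comps n) A =
          c (block_counts r Cs A) * (\<Prod>j<r. rel_quality M T (Cs j) (A \<inter> Cs j)))"

definition tuples :: "nat \<Rightarrow> (nat \<Rightarrow> nat set) \<Rightarrow> nat \<Rightarrow> nat list set" where
  "tuples r Cs k = {a. length a = r \<and> (\<forall>j<r. a ! j \<le> card (Cs j)) \<and> sum_list a = k}"

text \<open>E_{k,a}: among the k longest-lived components, exactly a_j lie in C_j.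
  The set B of the k longest-lived components is the k-subset of C all of whose
  members outlive every component outside it.\<close>
definition event_E ::
  "'a measure \<Rightarrow> (nat \<Rightarrow> 'a \<Rightarrow> real) \<Rightarrow> nat \<Rightarrow> nat \<Rightarrow> (nat \<Rightarrow> nat set) \<Rightarrow> nat \<Rightarrow> nat list \<Rightarrow> 'a set" where
  "event_E M T n r Cs k a =
     {\<omega> \<in> space M. \<exists>B. B \<subseteq> comps n \<and> card B = k \<and>
        (\<forall>i\<in>comps n - B. \<forall>l\<in>B. T i \<omega> < T l \<omega>) \<and>
        (\<forall>j<r. card (B \<inter> Cs j) = a ! j)}"

end

theory Submission
  imports Defs
begin

(* For a ground set D and A \<subseteq> D let top_event D A be the event that
   the members of A outlive all other members of D, so rel_quality M T D A is its
   probability.  Without ties, for each m \<le> |D| these events over the m-subsets A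
   of D are disjoint and almost surely exhaustive, hence their qualities sum to 1.
   The event E_{k,a} is the disjoint union of top_event C A over the sets A whose
   block counts are a, so Pr(E_{k,a}) = \<Sum> q(A) over those A.  Decomposability turns
   each summand into c(a) * \<Prod>_j q^{C_j}(A \<inter> C_j); since such A correspond
   bijectively to tuples of a_j-subsets of the blocks, the sum factorises into
   \<Prod>_j (\<Sum>_{B \<subseteq> C_j, |B| = a_j} q^{C_j}(B)) = 1, giving c(a) = Pr(E_{k,a}). *)

section \<open>Block counts with respect to a partition\<close>

definition with_counts :: "nat \<Rightarrow> (nat \<Rightarrow> nat set) \<Rightarrow> nat set \<Rightarrow> nat list \<Rightarrow> nat set set" where
  "with_counts r Cs C a = {A. A \<subseteq> C \<and> block_counts r Cs A = a}"

lemma block_counts_eq_iff: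
  assumes "length a = r"
  shows "block_counts r Cs A = a \<longleftrightarrow> (\<forall>j<r. card (A \<inter> Cs j) = a ! j)"
  using assms unfolding block_counts_def by (auto simp: list_eq_iff_nth_eq)

lemma card_eq_sum_block_counts:
  assumes part: "is_partition C r Cs" and "finite C" and "A \<subseteq> C"
  shows "card A = (\<Sum>j<r. card (A \<inter> Cs j))"
proof -
  have fin: "finite (A \<inter> Cs j)" for j using assms finite_subset by blast
  have disj: "Cs i \<inter> Cs j = {}" if "i < r" "j < r" "i \<noteq> j" for i j
    using part that by (auto simp: is_partition_def)
  have "A = (\<Union>j<r. A \<inter> Cs j)" using assms by (auto simp: is_partition_def)
  also have "card \<dots> = (\<Sum>j<r. card (A \<inter> Cs j))"
    by (rule card_UN_disjoint) (use fin disj in blast)+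
  finally show ?thesis .
qed

lemma block_counts_in_tuples:
  assumes "is_partition C r Cs" "finite C" "A \<subseteq> C" "card A = k"
  shows "block_counts r Cs A \<in> tuples r Cs k"
proof -
  have "finite (Cs j)" if "j < r" for j
    using assms that finite_subset by (auto simp: is_partition_def)
  then have "card (A \<inter> Cs j) \<le> card (Cs j)" if "j < r" for j
    using that by (simp add: card_mono)
  moreover have "sum_list (block_counts r Cs A) = k"
    using card_eq_sum_block_counts[OF assms(1-3)] assms(4)
    by (simp add: block_counts_def sum_list_sum_nth atLeast0LessThan)
  ultimately show ?thesis by (simp add: tuples_def block_counts_def)
qed

lemma with_counts_card:
  assumes "is_partition C r Cs" "finite C" "a \<in> tuples r Cs k" "A \<in> with_counts r Cs C a"
  shows "card A = k"
proof -
  have "length a = r" "sum_list a = k" using assms(3) by (auto simp: tuples_def)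
  then show ?thesis
    using assms card_eq_sum_block_counts[OF assms(1,2)] block_counts_eq_iff[of a r Cs A]
    by (simp add: with_counts_def sum_list_sum_nth atLeast0LessThan)
qed

text \<open>T_k is finite: its tuples have length r and entries at most k.\<close>
lemma finite_tuples: "finite (tuples r Cs k)"
proof (rule finite_subset[OF _ finite_lists_length_eq[of "{0..k}" r]])
  show "tuples r Cs k \<subseteq> {xs. set xs \<subseteq> {0..k} \<and> length xs = r}"
    using member_le_sum_list by (fastforce simp: tuples_def)
qed simp

lemma sum_group_by_block_counts:
  fixes f :: "nat set \<Rightarrow> real"
  assumes "is_partition C r Cs" "finite C"
  shows "(\<Sum>a\<in>tuples r Cs k. \<Sum>A\<in>with_counts r Cs C a. f A) = (\<Sum>A | A \<subseteq> C \<and> card A = k. f A)"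
proof -
  let ?Sk = "{A. A \<subseteq> C \<and> card A = k}"
  have fin: "finite ?Sk" using assms(2) by (auto intro: finite_subset[of _ "Pow C"])
  have img: "block_counts r Cs ` ?Sk \<subseteq> tuples r Cs k"
    using block_counts_in_tuples[OF assms] by blast
  have "(\<Sum>A\<in>?Sk. f A) = (\<Sum>a\<in>tuples r Cs k. \<Sum>A | A \<in> ?Sk \<and> block_counts r Cs A = a. f A)"
    by (rule sum.group[OF fin finite_tuples img, symmetric])
  also have "\<dots> = (\<Sum>a\<in>tuples r Cs k. \<Sum>A\<in>with_counts r Cs C a. f A)"
    using with_counts_card[OF assms] by (intro sum.cong refl arg_cong[where f = "sum f"])
      (auto simp: with_counts_def)
  finally show ?thesis by simp
qed

text \<open>A set with block counts a is the same as a choice of an a_j-subset of every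
  block, so a sum of products over the blocks factorises.\<close>
lemma sum_with_counts_factorise:
  fixes f :: "nat \<Rightarrow> nat set \<Rightarrow> real"
  assumes part: "is_partition C r Cs" and "finite C" and "length a = r"
  shows "(\<Sum>A\<in>with_counts r Cs C a. \<Prod>j<r. f j (A \<inter> Cs j))
       = (\<Prod>j<r. \<Sum>B | B \<subseteq> Cs j \<and> card B = a ! j. f j B)"
proof -
  let ?P = "\<lambda>j. {B. B \<subseteq> Cs j \<and> card B = a ! j}"
  have sub: "Cs j \<subseteq> C" if "j < r" for j using part that by (auto simp: is_partition_def)
  have disj: "Cs i \<inter> Cs j = {}" if "i < r" "j < r" "i \<noteq> j" for i j
    using part that by (auto simp: is_partition_def)
  have fin: "finite (?P j)" if "j < r" for j
    using finite_subset[OF sub[OF that] \<open>finite C\<close>] by (auto intro: finite_subset[of _ "Pow (Cs j)"])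
  have union_inter: "(\<Union>i<r. g i) \<inter> Cs j = g j" if "g \<in> PiE {..<r} ?P" "j < r" for g j
    using that disj by (fastforce simp: PiE_def Pi_def)
  have "(\<Prod>j<r. \<Sum>B\<in>?P j. f j B) = (\<Sum>g\<in>PiE {..<r} ?P. \<Prod>j<r. f j (g j))"
    by (rule prod_sum_PiE) (use fin in auto)
  also have "\<dots> = (\<Sum>A\<in>with_counts r Cs C a. \<Prod>j<r. f j (A \<inter> Cs j))"
  proof (rule sum.reindex_bij_witness[where j = "\<lambda>g. \<Union>i<r. g i"
        and i = "\<lambda>A. restrict (\<lambda>j. A \<inter> Cs j) {..<r}"])
    fix g assume g: "g \<in> PiE {..<r} ?P"
    show "restrict (\<lambda>j. (\<Union>i<r. g i) \<inter> Cs j) {..<r} = g"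
      using g union_inter[OF g] by (auto simp: PiE_def extensional_def fun_eq_iff)
    show "(\<Union>i<r. g i) \<in> with_counts r Cs C a"
      using g sub union_inter[OF g] block_counts_eq_iff[OF assms(3)]
      by (fastforce simp: with_counts_def)
    show "(\<Prod>j<r. f j ((\<Union>i<r. g i) \<inter> Cs j)) = (\<Prod>j<r. f j (g j))"
      using union_inter[OF g] by simp
  next
    fix A assume "A \<in> with_counts r Cs C a"
    then have "A \<subseteq> C" "\<forall>j<r. card (A \<inter> Cs j) = a ! j"
      using block_counts_eq_iff[OF assms(3)] by (auto simp: with_counts_def)
    then show "(\<Union>i<r. restrict (\<lambda>j. A \<inter> Cs j) {..<r} i) = A"
      and "restrict (\<lambda>j. A \<inter> Cs j) {..<r} \<in> PiE {..<r} ?P"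
      using part by (auto simp: is_partition_def)
  qed
  finally show ?thesis by simp
qed

section \<open>Top events\<close>

definition top_event :: "'a measure \<Rightarrow> (nat \<Rightarrow> 'a \<Rightarrow> real) \<Rightarrow> nat set \<Rightarrow> nat set \<Rightarrow> 'a set" where
  "top_event M T D A = {\<omega> \<in> space M. \<forall>i\<in>D - A. \<forall>l\<in>A. T i \<omega> < T l \<omega>}"

lemma rel_quality_eq_measure: "rel_quality M T D A = measure M (top_event M T D A)"
  by (simp add: rel_quality_def top_event_def)

text \<open>Top events are measurable, being finite intersections of events T i < T l.\<close>
lemma top_event_sets:
  assumes "finite D" "\<And>i. i \<in> D \<Longrightarrow> T i \<in> borel_measurable M" "A \<subseteq> D"
  shows "top_event M T D A \<in> sets M"
  unfolding top_event_def
proof (intro sets.sets_Collect_finite_All)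
  fix i l assume "i \<in> D - A" "l \<in> A"
  show "{x \<in> space M. T i x < T l x} \<in> sets M"
    using assms \<open>i \<in> D - A\<close> \<open>l \<in> A\<close> by (auto intro: borel_measurable_less)
qed (use assms finite_subset in auto)

lemma top_events_disjoint:
  assumes "finite D" "A \<subseteq> D" "A' \<subseteq> D" "card A = card A'" "A \<noteq> A'"
  shows "top_event M T D A \<inter> top_event M T D A' = {}"
proof -
  have "finite A" "finite A'" using assms finite_subset by auto
  then obtain x y where "x \<in> A - A'" "y \<in> A' - A"
    using assms(4,5) card_subset_eq by (metis Diff_eq_empty_iff ex_in_conv)
  then have "T x \<omega> < T y \<omega>" "T y \<omega> < T x \<omega>"
    if "\<omega> \<in> top_event M T D A" "\<omega> \<in> top_event M T D A'" for \<omega>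
    using that assms(2,3) unfolding top_event_def by blast+
  then show ?thesis by force
qed

lemma top_event_insert_max:
  assumes "\<omega> \<in> top_event M T D A" "inj_on (\<lambda>i. T i \<omega>) D"
    and "l \<in> D - A" "\<And>i. i \<in> D - A \<Longrightarrow> T i \<omega> \<le> T l \<omega>"
  shows "\<omega> \<in> top_event M T D (insert l A)"
proof -
  have "T i \<omega> < T l \<omega>" if i: "i \<in> D - insert l A" for i
  proof -
    have "T i \<omega> \<noteq> T l \<omega>" using i assms(3) inj_onD[OF assms(2)] by blast
    moreover have "T i \<omega> \<le> T l \<omega>" using i assms(4) by blast
    ultimately show ?thesis by simp
  qed
  then show ?thesis using assms(1) unfolding top_event_def by auto
qed

lemma top_event_exists:
  assumes "finite D" "inj_on (\<lambda>i. T i \<omega>) D" "\<omega> \<in> space M" "m \<le> card D"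
  shows "\<exists>A. A \<subseteq> D \<and> card A = m \<and> \<omega> \<in> top_event M T D A"
  using \<open>m \<le> card D\<close>
proof (induction m)
  case 0
  then show ?case using assms(3) by (intro exI[of _ "{}"]) (simp add: top_event_def)
next
  case (Suc m)
  then obtain A where A: "A \<subseteq> D" "card A = m" "\<omega> \<in> top_event M T D A" by auto
  have "finite A" using A(1) assms(1) finite_subset by blast
  have "\<not> D \<subseteq> A"
  proof
    assume "D \<subseteq> A"
    then have "card D \<le> m" using A(2) card_mono[OF \<open>finite A\<close>] by blast
    then show False using Suc.prems by simp
  qed
  then have "(\<lambda>i. T i \<omega>) ` (D - A) \<noteq> {}" by blast
  then have "Max ((\<lambda>i. T i \<omega>) ` (D - A)) \<in> (\<lambda>i. T i \<omega>) ` (D - A)"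
    using assms(1) by (intro Max_in) auto
  then obtain l where l: "l \<in> D - A" "T l \<omega> = Max ((\<lambda>i. T i \<omega>) ` (D - A))"
    by (metis imageE)
  have "\<omega> \<in> top_event M T D (insert l A)"
    by (rule top_event_insert_max[OF A(3) assms(2) l(1)]) (simp add: l(2) assms(1))
  moreover have "card (insert l A) = Suc m" using A(2) l(1) \<open>finite A\<close> by simp
  ultimately show ?case using A(1) l(1) by blast
qed

lemma rel_quality_sum_eq_1:
  assumes "prob_space M" "finite D" "\<And>i. i \<in> D \<Longrightarrow> T i \<in> borel_measurable M"
    and "AE \<omega> in M. inj_on (\<lambda>i. T i \<omega>) D" "m \<le> card D"
  shows "(\<Sum>A | A \<subseteq> D \<and> card A = m. rel_quality M T D A) = 1"
proof -
  interpret prob_space M by fact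
  let ?S = "{A. A \<subseteq> D \<and> card A = m}"
  let ?U = "\<Union>A\<in>?S. top_event M T D A"
  have "finite ?S" by (rule finite_subset[of _ "Pow D"]) (use assms(2) in auto)
  have sets: "top_event M T D A \<in> sets M" if "A \<in> ?S" for A
    using top_event_sets[OF assms(2,3)] that by simp
  have "measure M ?U = (\<Sum>A\<in>?S. measure M (top_event M T D A))"
  proof (rule measure_finite_Union[OF \<open>finite ?S\<close>])
    show "disjoint_family_on (top_event M T D) ?S" unfolding disjoint_family_on_def
      by (intro ballI impI top_events_disjoint[OF assms(2)]) auto
  qed (use sets in \<open>auto simp: emeasure_eq_measure\<close>)
  moreover have "AE \<omega> in M. \<omega> \<in> ?U"
    using assms(4) AE_space
  proof eventually_elim
    case (elim \<omega>)
    then obtain A where "A \<subseteq> D" "card A = m" "\<omega> \<in> top_event M T D A"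
      using top_event_exists[of D T \<omega> M, OF assms(2) elim assms(5)] by blast
    then show ?case by blast
  qed
  then have "measure M ?U = 1"
    by (rule AE_in_set_eq_1[THEN iffD1, rotated]) (use sets \<open>finite ?S\<close> in auto)
  ultimately show ?thesis by (simp add: rel_quality_eq_measure)
qed

lemma measure_event_E:
  assumes "prob_space M" "\<And>i. i \<in> comps n \<Longrightarrow> T i \<in> borel_measurable M"
    and part: "is_partition (comps n) r Cs" and a: "a \<in> tuples r Cs k"
  shows "measure M (event_E M T n r Cs k a)
       = (\<Sum>A\<in>with_counts r Cs (comps n) a. rel_quality M T (comps n) A)"
proof -
  interpret prob_space M by fact
  let ?W = "with_counts r Cs (comps n) a"
  have fin: "finite (comps n)" by (simp add: comps_def)
  have "finite ?W" using fin by (auto simp: with_counts_def intro: finite_subset[of _ "Pow (comps n)"])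
  have "event_E M T n r Cs k a = (\<Union>A\<in>?W. top_event M T (comps n) A)"
    using with_counts_card[OF part fin a] a block_counts_eq_iff[of a r Cs]
    unfolding event_E_def top_event_def with_counts_def tuples_def by auto
  also have "measure M \<dots> = (\<Sum>A\<in>?W. measure M (top_event M T (comps n) A))"
  proof (rule measure_finite_Union[OF \<open>finite ?W\<close>])
    show "disjoint_family_on (top_event M T (comps n)) ?W" unfolding disjoint_family_on_def
      using with_counts_card[OF part fin a]
      by (intro ballI impI top_events_disjoint[OF fin]) (auto simp: with_counts_def)
  qed (use top_event_sets[OF fin assms(2)] in \<open>auto simp: with_counts_def\<close>)
  finally show ?thesis by (simp add: rel_quality_eq_measure)
qed

lemma block_rel_quality_sum_eq_1:
  assumes "prob_space M" "\<And>i. i \<in> C \<Longrightarrow> T i \<in> borel_measurable M"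
    and "AE \<omega> in M. inj_on (\<lambda>i. T i \<omega>) C" "finite C"
    and "is_partition C r Cs" "j < r" "m \<le> card (Cs j)"
  shows "(\<Sum>B | B \<subseteq> Cs j \<and> card B = m. rel_quality M T (Cs j) B) = 1"
proof -
  have sub: "Cs j \<subseteq> C" using assms(5,6) by (auto simp: is_partition_def)
  have "AE \<omega> in M. inj_on (\<lambda>i. T i \<omega>) (Cs j)"
    using assms(3) by eventually_elim (rule inj_on_subset[OF _ sub])
  moreover have "finite (Cs j)" using finite_subset[OF sub assms(4)] .
  ultimately show ?thesis
    using rel_quality_sum_eq_1[OF assms(1)] assms(2) sub assms(7) by blast
qed

text \<open>The main identity c(a) = Pr(E_{k,a}): expand Pr(E_{k,a}) into qualities,
  apply decomposability, factorise over the blocks and use that each block sums to 1.\<close>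
lemma coefficient_eq_prob_event_E:
  assumes "prob_space M" "\<And>i. i \<in> comps n \<Longrightarrow> T i \<in> borel_measurable M"
    and "AE \<omega> in M. inj_on (\<lambda>i. T i \<omega>) (comps n)"
    and part: "is_partition (comps n) r Cs" and "decomposable M T n r Cs c"
    and a: "a \<in> tuples r Cs k"
  shows "c a = measure M (event_E M T n r Cs k a)"
proof -
  let ?C = "comps n" and ?q = "rel_quality M T"
  have fin: "finite ?C" by (simp add: comps_def)
  have "measure M (event_E M T n r Cs k a) = (\<Sum>A\<in>with_counts r Cs ?C a. ?q ?C A)"
    using measure_event_E[OF assms(1,2) part a] .
  also have "\<dots> = (\<Sum>A\<in>with_counts r Cs ?C a. c a * (\<Prod>j<r. ?q (Cs j) (A \<inter> Cs j)))"
    using assms(5) by (intro sum.cong) (auto simp: decomposable_def with_counts_def)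
  also have "\<dots> = c a * (\<Prod>j<r. \<Sum>B | B \<subseteq> Cs j \<and> card B = a ! j. ?q (Cs j) B)"
    using a sum_with_counts_factorise[OF part fin, where f = "\<lambda>j. ?q (Cs j)"]
    by (simp add: sum_distrib_left[symmetric] tuples_def)
  also have "\<dots> = c a"
    using a block_rel_quality_sum_eq_1[OF assms(1-3) fin part] by (simp add: tuples_def)
  finally show ?thesis by simp
qed

text \<open>Proposition 5: on T_k the coefficients are the probabilities of the events E_{k,a};
  in particular they are nonnegative and, regrouping the k-subsets of C by their
  block counts, they sum to \<Sum>_{|A| = k} q(A) = 1.\<close>
theorem proposition5:
  fixes M :: "'a measure" and T :: "nat \<Rightarrow> 'a \<Rightarrow> real"
    and n r :: nat and Cs :: "nat \<Rightarrow> nat set" and c :: "nat list \<Rightarrow> real"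
  assumes "prob_space M"
    and "\<And>i. i \<in> comps n \<Longrightarrow> T i \<in> borel_measurable M"
    and "AE \<omega> in M. inj_on (\<lambda>i. T i \<omega>) (comps n)"
    and "is_partition (comps n) r Cs"
    and "decomposable M T n r Cs c"
    and "k \<le> n"
  shows "(\<forall>a\<in>tuples r Cs k. c a = measure M (event_E M T n r Cs k a))
         \<and> (\<forall>a\<in>tuples r Cs k. c a \<ge> 0) \<and> (\<Sum>a\<in>tuples r Cs k. c a) = 1"
proof -
  let ?C = "comps n"
  have fin: "finite ?C" and card: "card ?C = n" by (simp_all add: comps_def)
  note c_eq = coefficient_eq_prob_event_E[OF assms(1-5)]
  have "(\<Sum>a\<in>tuples r Cs k. c a) = (\<Sum>A | A \<subseteq> ?C \<and> card A = k. rel_quality M T ?C A)"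
    using c_eq measure_event_E[OF assms(1,2,4)]
    by (simp add: sum_group_by_block_counts[OF assms(4) fin, symmetric])
  also have "\<dots> = 1"
    using rel_quality_sum_eq_1[OF assms(1) fin assms(2,3)] assms(6) card by simp
  finally show ?thesis using c_eq by simp
qed

end
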